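(* Let $\mathcal T$ be an essentially small triangulated category and $\mathscr M$ the class of good metrics on $\mathcal T$, with $\sim$ the equivalence of metrics. Then $\mathscr M/\!\sim$, ordered by $\le$, is a lattice. For good metrics $\mathcal A=\{A_n\}_{n}$ and $\mathcal C=\{C_n\}_n$, the meet is $[\mathcal A]\wedge[\mathcal C]=[\{A_n\cap C_n\}_{n}]$ and the join is $[\mathcal A]\vee[\mathcal C]=[\{\overline{A_n\cup C_n}\}_n]$ (both well defined, i.e. independent of the representatives).
   Context: A good metric is a chain $B_1\supseteq B_2\supseteq\cdots$ of full subcategories of $\mathcal T$ each containing $0$, closed under extensions, with $\Sigma^{-1}B_{n+1}\cup B_{n+1}\cup\Sigma B_{n+1}\subseteq B_n$. $\{A_n\}\le\{C_n\}$ if for every $n$ there is $m$ with $A_m\subseteq C_n$; $\mathcal A\sim\mathcal C$ if $\mathcal A\le\mathcal C$ and $\mathcal C\le\mathcal A$. For a class $\mathcal X$, $\overline{\mathcal X}$ is the smallest full subcategory containing $\mathcal X$ and $0$ closed under extensions. *)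

theory Defs
  imports Main
begin

record ('o,'m) tcat =
  tc_Obj  :: "'o set"
  tc_Hom  :: "'o \<Rightarrow> 'o \<Rightarrow> 'm set"
  tc_cmp  :: "'m \<Rightarrow> 'm \<Rightarrow> 'm"      (* tc_cmp T g f = g o f *)
  tc_idm  :: "'o \<Rightarrow> 'm"
  tc_add  :: "'m \<Rightarrow> 'm \<Rightarrow> 'm"
  tc_zero :: "'o \<Rightarrow> 'o \<Rightarrow> 'm"
  tc_neg  :: "'m \<Rightarrow> 'm"
  tc_shO  :: "'o \<Rightarrow> 'o"
  tc_shM  :: "'m \<Rightarrow> 'm"
  tc_Dist :: "('o \<times> 'o \<times> 'o \<times> 'm \<times> 'm \<times> 'm) set"  (* distinguished triangles X->Y->Z->SX *)

definition is_category :: "('o,'m) tcat \<Rightarrow> bool" where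
  "is_category T \<longleftrightarrow>
    (\<forall>X Y. tc_Hom T X Y \<noteq> {} \<longrightarrow> X \<in> tc_Obj T \<and> Y \<in> tc_Obj T) \<and>
    (\<forall>X\<in>tc_Obj T. tc_idm T X \<in> tc_Hom T X X) \<and>
    (\<forall>X Y Z f g. f \<in> tc_Hom T X Y \<longrightarrow> g \<in> tc_Hom T Y Z \<longrightarrow> tc_cmp T g f \<in> tc_Hom T X Z) \<and>
    (\<forall>W X Y Z f g h. f \<in> tc_Hom T W X \<longrightarrow> g \<in> tc_Hom T X Y \<longrightarrow> h \<in> tc_Hom T Y Z \<longrightarrow>
        tc_cmp T h (tc_cmp T g f) = tc_cmp T (tc_cmp T h g) f) \<and>
    (\<forall>X Y f. f \<in> tc_Hom T X Y \<longrightarrow> tc_cmp T (tc_idm T Y) f = f \<and> tc_cmp T f (tc_idm T X) = f)"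

definition is_preadditive :: "('o,'m) tcat \<Rightarrow> bool" where
  "is_preadditive T \<longleftrightarrow> is_category T \<and>
    (\<forall>X\<in>tc_Obj T. \<forall>Y\<in>tc_Obj T.
       tc_zero T X Y \<in> tc_Hom T X Y \<and>
       (\<forall>f\<in>tc_Hom T X Y. \<forall>g\<in>tc_Hom T X Y.
          tc_add T f g \<in> tc_Hom T X Y \<and> tc_add T f g = tc_add T g f) \<and>
       (\<forall>f\<in>tc_Hom T X Y. \<forall>g\<in>tc_Hom T X Y. \<forall>h\<in>tc_Hom T X Y.
          tc_add T (tc_add T f g) h = tc_add T f (tc_add T g h)) \<and>
       (\<forall>f\<in>tc_Hom T X Y. tc_add T f (tc_zero T X Y) = f \<and>
          tc_neg T f \<in> tc_Hom T X Y \<and> tc_add T f (tc_neg T f) = tc_zero T X Y)) \<and>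
    (\<forall>X Y Z f f' g. f \<in> tc_Hom T X Y \<longrightarrow> f' \<in> tc_Hom T X Y \<longrightarrow> g \<in> tc_Hom T Y Z \<longrightarrow>
        tc_cmp T g (tc_add T f f') = tc_add T (tc_cmp T g f) (tc_cmp T g f')) \<and>
    (\<forall>X Y Z f g g'. f \<in> tc_Hom T X Y \<longrightarrow> g \<in> tc_Hom T Y Z \<longrightarrow> g' \<in> tc_Hom T Y Z \<longrightarrow>
        tc_cmp T (tc_add T g g') f = tc_add T (tc_cmp T g f) (tc_cmp T g' f))"

definition is_iso :: "('o,'m) tcat \<Rightarrow> 'o \<Rightarrow> 'o \<Rightarrow> 'm \<Rightarrow> bool" where
  "is_iso T X Y f \<longleftrightarrow> f \<in> tc_Hom T X Y \<and>
     (\<exists>g\<in>tc_Hom T Y X. tc_cmp T g f = tc_idm T X \<and> tc_cmp T f g = tc_idm T Y)"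

definition is_zero_obj :: "('o,'m) tcat \<Rightarrow> 'o \<Rightarrow> bool" where
  "is_zero_obj T Z \<longleftrightarrow> Z \<in> tc_Obj T \<and>
     (\<forall>Y\<in>tc_Obj T. (\<exists>!f. f \<in> tc_Hom T Z Y) \<and> (\<exists>!f. f \<in> tc_Hom T Y Z))"

definition is_biproduct :: "('o,'m) tcat \<Rightarrow> 'o \<Rightarrow> 'o \<Rightarrow> 'o \<Rightarrow> 'm \<Rightarrow> 'm \<Rightarrow> 'm \<Rightarrow> 'm \<Rightarrow> bool" where
  "is_biproduct T X Y P i1 i2 p1 p2 \<longleftrightarrow> P \<in> tc_Obj T \<and>
     i1 \<in> tc_Hom T X P \<and> i2 \<in> tc_Hom T Y P \<and> p1 \<in> tc_Hom T P X \<and> p2 \<in> tc_Hom T P Y \<and>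
     tc_cmp T p1 i1 = tc_idm T X \<and> tc_cmp T p2 i2 = tc_idm T Y \<and>
     tc_cmp T p1 i2 = tc_zero T Y X \<and> tc_cmp T p2 i1 = tc_zero T X Y \<and>
     tc_add T (tc_cmp T i1 p1) (tc_cmp T i2 p2) = tc_idm T P"

definition is_additive :: "('o,'m) tcat \<Rightarrow> bool" where
  "is_additive T \<longleftrightarrow> is_preadditive T \<and> (\<exists>Z. is_zero_obj T Z) \<and>
     (\<forall>X\<in>tc_Obj T. \<forall>Y\<in>tc_Obj T. \<exists>P i1 i2 p1 p2. is_biproduct T X Y P i1 i2 p1 p2)"

definition is_shift_autoequiv :: "('o,'m) tcat \<Rightarrow> bool" where
  "is_shift_autoequiv T \<longleftrightarrow>
    (\<forall>X\<in>tc_Obj T. tc_shO T X \<in> tc_Obj T) \<and>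
    (\<forall>X Y f. f \<in> tc_Hom T X Y \<longrightarrow> tc_shM T f \<in> tc_Hom T (tc_shO T X) (tc_shO T Y)) \<and>
    (\<forall>X\<in>tc_Obj T. tc_shM T (tc_idm T X) = tc_idm T (tc_shO T X)) \<and>
    (\<forall>X Y Z f g. f \<in> tc_Hom T X Y \<longrightarrow> g \<in> tc_Hom T Y Z \<longrightarrow>
        tc_shM T (tc_cmp T g f) = tc_cmp T (tc_shM T g) (tc_shM T f)) \<and>
    (\<forall>X Y f g. f \<in> tc_Hom T X Y \<longrightarrow> g \<in> tc_Hom T X Y \<longrightarrow>
        tc_shM T (tc_add T f g) = tc_add T (tc_shM T f) (tc_shM T g)) \<and>
    (\<forall>X\<in>tc_Obj T. \<forall>Y\<in>tc_Obj T.
        bij_betw (tc_shM T) (tc_Hom T X Y) (tc_Hom T (tc_shO T X) (tc_shO T Y))) \<and>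
    (\<forall>Y\<in>tc_Obj T. \<exists>X\<in>tc_Obj T. \<exists>f. is_iso T (tc_shO T X) Y f)"

definition is_triangle :: "('o,'m) tcat \<Rightarrow> 'o \<times> 'o \<times> 'o \<times> 'm \<times> 'm \<times> 'm \<Rightarrow> bool" where
  "is_triangle T t = (case t of (X,Y,Z,f,g,h) \<Rightarrow>
     f \<in> tc_Hom T X Y \<and> g \<in> tc_Hom T Y Z \<and> h \<in> tc_Hom T Z (tc_shO T X))"

definition tri_mor :: "('o,'m) tcat \<Rightarrow> 'o \<times> 'o \<times> 'o \<times> 'm \<times> 'm \<times> 'm \<Rightarrow>
    'o \<times> 'o \<times> 'o \<times> 'm \<times> 'm \<times> 'm \<Rightarrow> 'm \<Rightarrow> 'm \<Rightarrow> 'm \<Rightarrow> bool" where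
  "tri_mor T t t' a b c = (case t of (X,Y,Z,f,g,h) \<Rightarrow> case t' of (X',Y',Z',f',g',h') \<Rightarrow>
     a \<in> tc_Hom T X X' \<and> b \<in> tc_Hom T Y Y' \<and> c \<in> tc_Hom T Z Z' \<and>
     tc_cmp T b f = tc_cmp T f' a \<and> tc_cmp T c g = tc_cmp T g' b \<and>
     tc_cmp T (tc_shM T a) h = tc_cmp T h' c)"

definition tri_iso :: "('o,'m) tcat \<Rightarrow> 'o \<times> 'o \<times> 'o \<times> 'm \<times> 'm \<times> 'm \<Rightarrow>
    'o \<times> 'o \<times> 'o \<times> 'm \<times> 'm \<times> 'm \<Rightarrow> 'm \<Rightarrow> 'm \<Rightarrow> 'm \<Rightarrow> bool" where
  "tri_iso T t t' a b c = (tri_mor T t t' a b c \<and> (case t of (X,Y,Z,_) \<Rightarrow> case t' of (X',Y',Z',_) \<Rightarrow>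
     is_iso T X X' a \<and> is_iso T Y Y' b \<and> is_iso T Z Z' c))"

definition is_triangulated :: "('o,'m) tcat \<Rightarrow> bool" where
  "is_triangulated T \<longleftrightarrow> is_additive T \<and> is_shift_autoequiv T \<and>
    \<comment> \<open>TR1\<close>
    (\<forall>t\<in>tc_Dist T. is_triangle T t) \<and>
    (\<forall>t t' a b c. t \<in> tc_Dist T \<and> is_triangle T t' \<and> tri_iso T t t' a b c \<longrightarrow> t' \<in> tc_Dist T) \<and>
    (\<forall>X\<in>tc_Obj T. \<forall>Z. is_zero_obj T Z \<longrightarrow>
        (X, X, Z, tc_idm T X, tc_zero T X Z, tc_zero T Z (tc_shO T X)) \<in> tc_Dist T) \<and>
    (\<forall>X Y f. f \<in> tc_Hom T X Y \<longrightarrow> (\<exists>Z g h. (X,Y,Z,f,g,h) \<in> tc_Dist T)) \<and>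
    \<comment> \<open>TR2 (rotation)\<close>
    (\<forall>X Y Z f g h. is_triangle T (X,Y,Z,f,g,h) \<longrightarrow>
        ((X,Y,Z,f,g,h) \<in> tc_Dist T \<longleftrightarrow> (Y, Z, tc_shO T X, g, h, tc_neg T (tc_shM T f)) \<in> tc_Dist T)) \<and>
    \<comment> \<open>TR3\<close>
    (\<forall>X Y Z f g h X' Y' Z' f' g' h' a b.
        (X,Y,Z,f,g,h) \<in> tc_Dist T \<and> (X',Y',Z',f',g',h') \<in> tc_Dist T \<and>
        a \<in> tc_Hom T X X' \<and> b \<in> tc_Hom T Y Y' \<and> tc_cmp T b f = tc_cmp T f' a \<longrightarrow>
        (\<exists>c. tri_mor T (X,Y,Z,f,g,h) (X',Y',Z',f',g',h') a b c)) \<and>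
    \<comment> \<open>TR4 (octahedral axiom)\<close>
    (\<forall>X Y Z Z' X' Y' u v j k l i m n.
        (X,Y,Z',u,j,k) \<in> tc_Dist T \<and> (Y,Z,X',v,l,i) \<in> tc_Dist T \<and>
        (X,Z,Y',tc_cmp T v u,m,n) \<in> tc_Dist T \<longrightarrow>
        (\<exists>f g. (Z',Y',X',f,g,tc_cmp T (tc_shM T j) i) \<in> tc_Dist T \<and>
           tc_cmp T f j = tc_cmp T m v \<and> tc_cmp T n f = k \<and>
           tc_cmp T g m = l \<and> tc_cmp T (tc_shM T u) n = tc_cmp T i g))"

definition contains_zero :: "('o,'m) tcat \<Rightarrow> 'o set \<Rightarrow> bool" where
  "contains_zero T B \<longleftrightarrow> (\<exists>Z\<in>B. is_zero_obj T Z)"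

definition ext_closed :: "('o,'m) tcat \<Rightarrow> 'o set \<Rightarrow> bool" where
  "ext_closed T B \<longleftrightarrow>
     (\<forall>X Y Z f g h. (X,Y,Z,f,g,h) \<in> tc_Dist T \<and> X \<in> B \<and> Z \<in> B \<longrightarrow> Y \<in> B)"

text \<open>Full subcategories are identified with their classes of objects.\<close>
definition good_metric :: "('o,'m) tcat \<Rightarrow> (nat \<Rightarrow> 'o set) \<Rightarrow> bool" where
  "good_metric T B \<longleftrightarrow>
     (\<forall>n. B n \<subseteq> tc_Obj T \<and> contains_zero T (B n) \<and> ext_closed T (B n)) \<and>
     (\<forall>n. B (Suc n) \<subseteq> B n) \<and>
     (\<forall>n. {X \<in> tc_Obj T. tc_shO T X \<in> B (Suc n)} \<union> B (Suc n) \<union> tc_shO T ` B (Suc n) \<subseteq> B n)"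

definition metric_le :: "(nat \<Rightarrow> 'o set) \<Rightarrow> (nat \<Rightarrow> 'o set) \<Rightarrow> bool" where
  "metric_le A C \<longleftrightarrow> (\<forall>n. \<exists>m. A m \<subseteq> C n)"

definition metric_equiv :: "(nat \<Rightarrow> 'o set) \<Rightarrow> (nat \<Rightarrow> 'o set) \<Rightarrow> bool" where
  "metric_equiv A C \<longleftrightarrow> metric_le A C \<and> metric_le C A"

inductive_set ext_hull :: "('o,'m) tcat \<Rightarrow> 'o set \<Rightarrow> 'o set" for T X where
  base: "x \<in> X \<Longrightarrow> x \<in> ext_hull T X"
| zero: "is_zero_obj T Z \<Longrightarrow> Z \<in> ext_hull T X"
| ext: "(A,B,C,f,g,h) \<in> tc_Dist T \<Longrightarrow> A \<in> ext_hull T X \<Longrightarrow> C \<in> ext_hull T X \<Longrightarrow> B \<in> ext_hull T X"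

definition metric_meet :: "(nat \<Rightarrow> 'o set) \<Rightarrow> (nat \<Rightarrow> 'o set) \<Rightarrow> nat \<Rightarrow> 'o set" where
  "metric_meet A C = (\<lambda>n. A n \<inter> C n)"

definition metric_join :: "('o,'m) tcat \<Rightarrow> (nat \<Rightarrow> 'o set) \<Rightarrow> (nat \<Rightarrow> 'o set) \<Rightarrow> nat \<Rightarrow> 'o set" where
  "metric_join T A C = (\<lambda>n. ext_hull T (A n \<union> C n))"

end

theory Submission
  imports Defs
begin

(*
  Meets and joins are formed levelwise, and for decreasing sequences any two inequalities
  A \<le> A', C \<le> C' can be witnessed at one common index, so the lattice laws and their
  independence of representatives are bookkeeping. The substance is that the levels
  H n = ext_hull (A n \<union> C n) again form a good metric, i.e. that \<Sigma> and \<Sigma>^-1 map H (n+1)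
  into H n. For \<Sigma> this is because \<Sigma> of a distinguished triangle is distinguished up to
  signs (rotate three times). For \<Sigma>^-1 one inducts over the hull: given a distinguished
  triangle A \<rightarrow> Y \<rightarrow> C and \<Sigma>X \<cong> Y, write A \<cong> \<Sigma>Xa and C \<cong> \<Sigma>Xc (\<Sigma> is essentially
  surjective), transport the triangle along these isomorphisms and rotate it backwards,
  using that \<Sigma> is full, to a distinguished triangle Xa \<rightarrow> X \<rightarrow> Xc. The base case needs the
  levels of a good metric to be closed under isomorphism, which follows from closure under
  extensions: X' is an extension of X by 0 whenever X \<cong> X'.
*)

definition isomorphic :: "('o,'m) tcat \<Rightarrow> 'o \<Rightarrow> 'o \<Rightarrow> bool" where
  "isomorphic T X Y \<longleftrightarrow> (\<exists>f. is_iso T X Y f)"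

definition iso_closed :: "('o,'m) tcat \<Rightarrow> 'o set \<Rightarrow> bool" where
  "iso_closed T B \<longleftrightarrow> (\<forall>X\<in>B. \<forall>Y. isomorphic T X Y \<longrightarrow> Y \<in> B)"

(* Membership is demanded for every X with \<Sigma>X merely isomorphic to Y, because the vertices
   of a distinguished triangle are suspensions only up to isomorphism. *)
definition desuspensions_in :: "('o,'m) tcat \<Rightarrow> 'o set \<Rightarrow> 'o set" where
  "desuspensions_in T B = {Y. \<forall>X\<in>tc_Obj T. isomorphic T (tc_shO T X) Y \<longrightarrow> X \<in> B}"

lemma iso_closed_Un: "iso_closed T A \<Longrightarrow> iso_closed T C \<Longrightarrow> iso_closed T (A \<union> C)"
  unfolding iso_closed_def by blast

lemma bij_betw_ex1_iff: "bij_betw F A B \<Longrightarrow> (\<exists>!x. x \<in> A) \<longleftrightarrow> (\<exists>!y. y \<in> B)"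
  unfolding bij_betw_def inj_on_def by blast

lemma zero_objI:
  "Z \<in> tc_Obj T \<Longrightarrow> (\<And>Y. Y \<in> tc_Obj T \<Longrightarrow> \<exists>!f. f \<in> tc_Hom T Z Y) \<Longrightarrow>
    (\<And>Y. Y \<in> tc_Obj T \<Longrightarrow> \<exists>!f. f \<in> tc_Hom T Y Z) \<Longrightarrow> is_zero_obj T Z"
  by (simp add: is_zero_obj_def)

lemma zero_objD:
  assumes "is_zero_obj T Z" "Y \<in> tc_Obj T"
  shows zero_obj_ex1_from: "\<exists>!f. f \<in> tc_Hom T Z Y"
    and zero_obj_ex1_to: "\<exists>!f. f \<in> tc_Hom T Y Z"
  using assms by (simp_all add: is_zero_obj_def)

lemma zero_obj_Obj: "is_zero_obj T Z \<Longrightarrow> Z \<in> tc_Obj T"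
  by (simp add: is_zero_obj_def)

lemma ext_hull_mono:
  assumes "S \<subseteq> S'"
  shows "ext_hull T S \<subseteq> ext_hull T S'"
proof
  fix X assume "X \<in> ext_hull T S"
  then show "X \<in> ext_hull T S'"
    by induction (use assms in \<open>auto intro: ext_hull.intros\<close>)
qed

lemma ext_closed_ext_hull: "ext_closed T (ext_hull T S)"
  unfolding ext_closed_def by (blast intro: ext_hull.ext)

locale triangulated_category =
  fixes T :: "('o,'m) tcat"
  assumes triangulated: "is_triangulated T"
begin

lemma additive: "is_additive T"
  using triangulated by (simp add: is_triangulated_def)

lemma preadditive: "is_preadditive T"
  using additive by (simp add: is_additive_def)

lemma category: "is_category T"
  using preadditive by (simp add: is_preadditive_def)

lemma shift_autoequiv: "is_shift_autoequiv T"
  using triangulated by (simp add: is_triangulated_def)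

lemma Hom_Obj: "f \<in> tc_Hom T X Y \<Longrightarrow> X \<in> tc_Obj T \<and> Y \<in> tc_Obj T"
  using category unfolding is_category_def by blast

lemma tc_idm_Hom: "X \<in> tc_Obj T \<Longrightarrow> tc_idm T X \<in> tc_Hom T X X"
  using category unfolding is_category_def by blast

lemma tc_cmp_Hom: "f \<in> tc_Hom T X Y \<Longrightarrow> g \<in> tc_Hom T Y Z \<Longrightarrow> tc_cmp T g f \<in> tc_Hom T X Z"
  using category unfolding is_category_def by blast

lemma tc_cmp_assoc:
  "f \<in> tc_Hom T W X \<Longrightarrow> g \<in> tc_Hom T X Y \<Longrightarrow> h \<in> tc_Hom T Y Z \<Longrightarrow>
    tc_cmp T h (tc_cmp T g f) = tc_cmp T (tc_cmp T h g) f"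
  using category unfolding is_category_def by blast

lemma tc_idm_cmp: "f \<in> tc_Hom T X Y \<Longrightarrow> tc_cmp T (tc_idm T Y) f = f"
  using category unfolding is_category_def by blast

lemma tc_cmp_idm: "f \<in> tc_Hom T X Y \<Longrightarrow> tc_cmp T f (tc_idm T X) = f"
  using category unfolding is_category_def by blast

lemma Hom_abelian_group:
  assumes "X \<in> tc_Obj T" "Y \<in> tc_Obj T"
  shows "tc_zero T X Y \<in> tc_Hom T X Y \<and>
    (\<forall>f\<in>tc_Hom T X Y. \<forall>g\<in>tc_Hom T X Y. tc_add T f g \<in> tc_Hom T X Y \<and> tc_add T f g = tc_add T g f) \<and>
    (\<forall>f\<in>tc_Hom T X Y. \<forall>g\<in>tc_Hom T X Y. \<forall>h\<in>tc_Hom T X Y.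
      tc_add T (tc_add T f g) h = tc_add T f (tc_add T g h)) \<and>
    (\<forall>f\<in>tc_Hom T X Y. tc_add T f (tc_zero T X Y) = f \<and>
      tc_neg T f \<in> tc_Hom T X Y \<and> tc_add T f (tc_neg T f) = tc_zero T X Y)"
  using preadditive[unfolded is_preadditive_def, THEN conjunct2, THEN conjunct1] assms by blast

lemma tc_zero_Hom: "X \<in> tc_Obj T \<Longrightarrow> Y \<in> tc_Obj T \<Longrightarrow> tc_zero T X Y \<in> tc_Hom T X Y"
  using Hom_abelian_group by blast

lemma tc_neg_Hom: "f \<in> tc_Hom T X Y \<Longrightarrow> tc_neg T f \<in> tc_Hom T X Y"
  using Hom_abelian_group Hom_Obj by blast

lemma tc_add_commute: "f \<in> tc_Hom T X Y \<Longrightarrow> g \<in> tc_Hom T X Y \<Longrightarrow> tc_add T f g = tc_add T g f"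
  using Hom_abelian_group Hom_Obj by blast

lemma tc_add_assoc:
  "f \<in> tc_Hom T X Y \<Longrightarrow> g \<in> tc_Hom T X Y \<Longrightarrow> h \<in> tc_Hom T X Y \<Longrightarrow>
    tc_add T (tc_add T f g) h = tc_add T f (tc_add T g h)"
  using Hom_abelian_group Hom_Obj by blast

lemma tc_add_zero: "f \<in> tc_Hom T X Y \<Longrightarrow> tc_add T f (tc_zero T X Y) = f"
  using Hom_abelian_group Hom_Obj by blast

lemma tc_add_neg: "f \<in> tc_Hom T X Y \<Longrightarrow> tc_add T f (tc_neg T f) = tc_zero T X Y"
  using Hom_abelian_group Hom_Obj by blast

lemma tc_neg_neg:
  assumes f: "f \<in> tc_Hom T X Y"
  shows "tc_neg T (tc_neg T f) = f"
proof -
  let ?add = "tc_add T" and ?n = "tc_neg T f" and ?nn = "tc_neg T (tc_neg T f)"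
  have n: "?n \<in> tc_Hom T X Y" and nn: "?nn \<in> tc_Hom T X Y"
    using tc_neg_Hom f by blast+
  have "?nn = ?add ?nn (?add f ?n)"
    using tc_add_zero[OF nn] tc_add_neg[OF f] by simp
  also have "\<dots> = ?add (?add ?n ?nn) f"
    using tc_add_assoc tc_add_commute f n nn by metis
  also have "\<dots> = f"
    using tc_add_neg[OF n] tc_add_commute tc_add_zero f tc_zero_Hom Hom_Obj by metis
  finally show ?thesis .
qed

lemma shift_Obj: "X \<in> tc_Obj T \<Longrightarrow> tc_shO T X \<in> tc_Obj T"
  using shift_autoequiv unfolding is_shift_autoequiv_def by blast

lemma shift_Hom: "f \<in> tc_Hom T X Y \<Longrightarrow> tc_shM T f \<in> tc_Hom T (tc_shO T X) (tc_shO T Y)"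
  using shift_autoequiv unfolding is_shift_autoequiv_def by blast

lemma shift_bij_Hom:
  "X \<in> tc_Obj T \<Longrightarrow> Y \<in> tc_Obj T \<Longrightarrow>
    bij_betw (tc_shM T) (tc_Hom T X Y) (tc_Hom T (tc_shO T X) (tc_shO T Y))"
  using shift_autoequiv unfolding is_shift_autoequiv_def by blast

lemma shift_full:
  assumes "g \<in> tc_Hom T (tc_shO T X) (tc_shO T Y)" "X \<in> tc_Obj T" "Y \<in> tc_Obj T"
  obtains f where "f \<in> tc_Hom T X Y" "tc_shM T f = g"
proof -
  have "g \<in> tc_shM T ` tc_Hom T X Y"
    using bij_betw_imp_surj_on[OF shift_bij_Hom[OF assms(2,3)]] assms(1) by simp
  then show thesis
    using that by blast
qed

lemma shift_ess_surj: "Y \<in> tc_Obj T \<Longrightarrow> \<exists>X\<in>tc_Obj T. isomorphic T (tc_shO T X) Y"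
  using shift_autoequiv unfolding is_shift_autoequiv_def isomorphic_def by blast

lemma dist_triangle: "t \<in> tc_Dist T \<Longrightarrow> is_triangle T t"
  using triangulated unfolding is_triangulated_def by (elim conjE) blast

lemma dist_tri_iso: "t \<in> tc_Dist T \<Longrightarrow> is_triangle T t' \<Longrightarrow> tri_iso T t t' a b c \<Longrightarrow> t' \<in> tc_Dist T"
  using triangulated unfolding is_triangulated_def by (elim conjE) blast

lemma dist_trivial:
  "X \<in> tc_Obj T \<Longrightarrow> is_zero_obj T Z \<Longrightarrow>
    (X, X, Z, tc_idm T X, tc_zero T X Z, tc_zero T Z (tc_shO T X)) \<in> tc_Dist T"
  using triangulated unfolding is_triangulated_def by (elim conjE) blast

lemma dist_rotate_iff:
  "is_triangle T (X, Y, Z, f, g, h) \<Longrightarrow>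
    (X, Y, Z, f, g, h) \<in> tc_Dist T \<longleftrightarrow> (Y, Z, tc_shO T X, g, h, tc_neg T (tc_shM T f)) \<in> tc_Dist T"
  using triangulated unfolding is_triangulated_def by (elim conjE) blast

lemma dist_rotate:
  "(X, Y, Z, f, g, h) \<in> tc_Dist T \<Longrightarrow> (Y, Z, tc_shO T X, g, h, tc_neg T (tc_shM T f)) \<in> tc_Dist T"
  using dist_rotate_iff dist_triangle by blast

lemma ex_zero_obj: "\<exists>Z. is_zero_obj T Z"
  using additive unfolding is_additive_def by blast

section \<open>Isomorphisms and zero objects\<close>

lemma iso_Hom: "is_iso T X Y f \<Longrightarrow> f \<in> tc_Hom T X Y"
  by (simp add: is_iso_def)

lemma iso_inverse:
  assumes "is_iso T X Y f"
  obtains g where "is_iso T Y X g" "tc_cmp T g f = tc_idm T X" "tc_cmp T f g = tc_idm T Y"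
  using assms unfolding is_iso_def by blast

lemma iso_id: "X \<in> tc_Obj T \<Longrightarrow> is_iso T X X (tc_idm T X)"
  unfolding is_iso_def using tc_idm_Hom tc_idm_cmp by metis

lemma isomorphic_refl: "X \<in> tc_Obj T \<Longrightarrow> isomorphic T X X"
  unfolding isomorphic_def using iso_id by blast

lemma isomorphicE:
  assumes "isomorphic T X Y"
  obtains f g where "is_iso T X Y f" "is_iso T Y X g"
    "tc_cmp T g f = tc_idm T X" "tc_cmp T f g = tc_idm T Y"
proof -
  obtain f where f: "is_iso T X Y f"
    using assms unfolding isomorphic_def by blast
  show thesis
    using iso_inverse[OF f] that[OF f] by blast
qed

lemma isomorphic_sym: "isomorphic T X Y \<Longrightarrow> isomorphic T Y X"
  by (elim isomorphicE) (auto simp: isomorphic_def)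

lemma bij_betw_comp_iso_left:
  assumes "is_iso T Q Q' \<beta>"
  shows "bij_betw (tc_cmp T \<beta>) (tc_Hom T P Q) (tc_Hom T P Q')"
proof -
  obtain \<beta>' where \<beta>': "is_iso T Q' Q \<beta>'" "tc_cmp T \<beta>' \<beta> = tc_idm T Q" "tc_cmp T \<beta> \<beta>' = tc_idm T Q'"
    using iso_inverse[OF assms] .
  note Homs = iso_Hom[OF assms] iso_Hom[OF \<beta>'(1)]
  show ?thesis
  proof (rule bij_betw_byWitness[where f' = "tc_cmp T \<beta>'"])
    show "\<forall>f\<in>tc_Hom T P Q. tc_cmp T \<beta>' (tc_cmp T \<beta> f) = f"
      using Homs \<beta>'(2) tc_cmp_assoc tc_idm_cmp by metis
    show "\<forall>g\<in>tc_Hom T P Q'. tc_cmp T \<beta> (tc_cmp T \<beta>' g) = g"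
      using Homs \<beta>'(3) tc_cmp_assoc tc_idm_cmp by metis
  qed (use Homs tc_cmp_Hom in blast)+
qed

lemma bij_betw_comp_iso_right:
  assumes "is_iso T P' P \<alpha>"
  shows "bij_betw (\<lambda>f. tc_cmp T f \<alpha>) (tc_Hom T P Q) (tc_Hom T P' Q)"
proof -
  obtain \<alpha>' where \<alpha>': "is_iso T P P' \<alpha>'" "tc_cmp T \<alpha>' \<alpha> = tc_idm T P'" "tc_cmp T \<alpha> \<alpha>' = tc_idm T P"
    using iso_inverse[OF assms] .
  note Homs = iso_Hom[OF assms] iso_Hom[OF \<alpha>'(1)]
  show ?thesis
  proof (rule bij_betw_byWitness[where f' = "\<lambda>g. tc_cmp T g \<alpha>'"])
    show "\<forall>f\<in>tc_Hom T P Q. tc_cmp T (tc_cmp T f \<alpha>) \<alpha>' = f"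
      using Homs \<alpha>'(3) tc_cmp_assoc tc_cmp_idm by metis
    show "\<forall>g\<in>tc_Hom T P' Q. tc_cmp T (tc_cmp T g \<alpha>') \<alpha> = g"
      using Homs \<alpha>'(2) tc_cmp_assoc tc_cmp_idm by metis
  qed (use Homs tc_cmp_Hom in blast)+
qed

lemma from_zero_obj_unique:
  assumes "is_zero_obj T Z" "f \<in> tc_Hom T Z Y" "g \<in> tc_Hom T Z Y"
  shows "f = g"
  using zero_obj_ex1_from[OF assms(1) conjunct2[OF Hom_Obj[OF assms(2)]]] assms(2,3) by blast

lemma to_zero_obj_unique:
  assumes "is_zero_obj T Z" "f \<in> tc_Hom T Y Z" "g \<in> tc_Hom T Y Z"
  shows "f = g"
  using zero_obj_ex1_to[OF assms(1) conjunct1[OF Hom_Obj[OF assms(2)]]] assms(2,3) by blast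

lemma zero_objs_isomorphic:
  assumes Z: "is_zero_obj T Z" and Z': "is_zero_obj T Z'"
  shows "isomorphic T Z Z'"
proof -
  note Obj = zero_obj_Obj[OF Z] zero_obj_Obj[OF Z']
  note Homs = tc_zero_Hom[OF Obj] tc_zero_Hom[OF Obj(2,1)]
  have "tc_cmp T (tc_zero T Z' Z) (tc_zero T Z Z') = tc_idm T Z"
    using from_zero_obj_unique[OF Z tc_cmp_Hom[OF Homs] tc_idm_Hom[OF Obj(1)]] .
  moreover have "tc_cmp T (tc_zero T Z Z') (tc_zero T Z' Z) = tc_idm T Z'"
    using from_zero_obj_unique[OF Z' tc_cmp_Hom[OF Homs(2,1)] tc_idm_Hom[OF Obj(2)]] .
  ultimately have "is_iso T Z Z' (tc_zero T Z Z')"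
    unfolding is_iso_def using Homs by blast
  then show ?thesis
    unfolding isomorphic_def by blast
qed

lemma isomorphic_zero_obj:
  assumes "isomorphic T W Z" and Z: "is_zero_obj T Z"
  shows "is_zero_obj T W"
proof -
  obtain \<phi> \<phi>' where \<phi>: "is_iso T W Z \<phi>" and \<phi>': "is_iso T Z W \<phi>'"
    using assms(1) by (rule isomorphicE)
  show ?thesis
  proof (rule zero_objI)
    show "W \<in> tc_Obj T"
      using Hom_Obj iso_Hom[OF \<phi>] by blast
    fix V assume V: "V \<in> tc_Obj T"
    show "\<exists>!f. f \<in> tc_Hom T W V"
      using zero_obj_ex1_from[OF Z V]
      by (simp add: bij_betw_ex1_iff[OF bij_betw_comp_iso_right[OF \<phi>]])
    show "\<exists>!f. f \<in> tc_Hom T V W"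
      using zero_obj_ex1_to[OF Z V]
      by (simp add: bij_betw_ex1_iff[OF bij_betw_comp_iso_left[OF \<phi>']])
  qed
qed

lemma zero_obj_shift:
  assumes Z: "is_zero_obj T Z"
  shows "is_zero_obj T (tc_shO T Z)"
proof (rule zero_objI)
  note Obj = zero_obj_Obj[OF Z]
  then show "tc_shO T Z \<in> tc_Obj T"
    by (rule shift_Obj)
  fix V assume V: "V \<in> tc_Obj T"
  obtain V0 where V0: "V0 \<in> tc_Obj T" "isomorphic T (tc_shO T V0) V"
    using shift_ess_surj[OF V] by blast
  then obtain \<alpha> \<alpha>' where \<alpha>: "is_iso T (tc_shO T V0) V \<alpha>" and \<alpha>': "is_iso T V (tc_shO T V0) \<alpha>'"
    by (blast elim: isomorphicE)
  show "\<exists>!f. f \<in> tc_Hom T (tc_shO T Z) V"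
    using zero_obj_ex1_from[OF Z V0(1)]
    by (simp add: bij_betw_ex1_iff[OF shift_bij_Hom[OF Obj V0(1)]]
        bij_betw_ex1_iff[OF bij_betw_comp_iso_left[OF \<alpha>]])
  show "\<exists>!f. f \<in> tc_Hom T V (tc_shO T Z)"
    using zero_obj_ex1_to[OF Z V0(1)]
    by (simp add: bij_betw_ex1_iff[OF shift_bij_Hom[OF V0(1) Obj]]
        bij_betw_ex1_iff[OF bij_betw_comp_iso_right[OF \<alpha>']])
qed

lemma zero_obj_shiftD:
  assumes X: "X \<in> tc_Obj T" and Z: "is_zero_obj T (tc_shO T X)"
  shows "is_zero_obj T X"
proof (rule zero_objI[OF X])
  fix V assume V: "V \<in> tc_Obj T"
  show "\<exists>!f. f \<in> tc_Hom T X V"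
    using zero_obj_ex1_from[OF Z shift_Obj[OF V]]
    by (simp add: bij_betw_ex1_iff[OF shift_bij_Hom[OF X V], symmetric])
  show "\<exists>!f. f \<in> tc_Hom T V X"
    using zero_obj_ex1_to[OF Z shift_Obj[OF V]]
    by (simp add: bij_betw_ex1_iff[OF shift_bij_Hom[OF V X], symmetric])
qed

section \<open>Suspending and desuspending distinguished triangles\<close>

lemma dist_shift:
  "(X, Y, Z, f, g, h) \<in> tc_Dist T \<Longrightarrow>
    \<exists>f' g' h'. (tc_shO T X, tc_shO T Y, tc_shO T Z, f', g', h') \<in> tc_Dist T"
  using dist_rotate by blast

lemma dist_rotate_back:
  assumes d: "(Y, Z, tc_shO T X, g, h, k) \<in> tc_Dist T" and X: "X \<in> tc_Obj T"
  obtains f where "(X, Y, Z, f, g, h) \<in> tc_Dist T"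
proof -
  have Homs: "g \<in> tc_Hom T Y Z" "h \<in> tc_Hom T Z (tc_shO T X)" "k \<in> tc_Hom T (tc_shO T X) (tc_shO T Y)"
    using dist_triangle[OF d] unfolding is_triangle_def by auto
  obtain f where f: "f \<in> tc_Hom T X Y" "tc_shM T f = tc_neg T k"
    using shift_full[OF tc_neg_Hom[OF Homs(3)] X] Hom_Obj[OF Homs(1)] by blast
  have "tc_neg T (tc_shM T f) = k"
    using f(2) tc_neg_neg[OF Homs(3)] by simp
  then have "(X, Y, Z, f, g, h) \<in> tc_Dist T"
    using dist_rotate_iff[of X Y Z f g h] d f(1) Homs unfolding is_triangle_def by auto
  then show thesis by (rule that)
qed

lemma dist_desuspend:
  assumes "(tc_shO T X, tc_shO T Y, tc_shO T Z, f, g, h) \<in> tc_Dist T"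
    and "X \<in> tc_Obj T" "Y \<in> tc_Obj T" "Z \<in> tc_Obj T"
  shows "\<exists>f' g' h'. (X, Y, Z, f', g', h') \<in> tc_Dist T"
proof -
  obtain h' where "(Z, tc_shO T X, tc_shO T Y, h', f, g) \<in> tc_Dist T"
    using dist_rotate_back assms(1,4) .
  then obtain g' where "(Y, Z, tc_shO T X, g', h', f) \<in> tc_Dist T"
    using dist_rotate_back assms(3) by blast
  then obtain f' where "(X, Y, Z, f', g', h') \<in> tc_Dist T"
    using dist_rotate_back assms(2) by blast
  then show ?thesis by blast
qed

lemma dist_isomorphic_vertices:
  assumes d: "(A, B, C, f, g, h) \<in> tc_Dist T"
    and "isomorphic T A A'" "isomorphic T B B'" "isomorphic T C C'"
  shows "\<exists>f' g' h'. (A', B', C', f', g', h') \<in> tc_Dist T"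
proof -
  obtain \<alpha> \<alpha>' \<beta> \<beta>' \<gamma> \<gamma>' where
    \<alpha>: "is_iso T A A' \<alpha>" "is_iso T A' A \<alpha>'" "tc_cmp T \<alpha>' \<alpha> = tc_idm T A" and
    \<beta>: "is_iso T B B' \<beta>" "is_iso T B' B \<beta>'" "tc_cmp T \<beta>' \<beta> = tc_idm T B" and
    \<gamma>: "is_iso T C C' \<gamma>" "is_iso T C' C \<gamma>'" "tc_cmp T \<gamma>' \<gamma> = tc_idm T C"
    using assms(2-4) by (elim isomorphicE) blast
  have Homs: "f \<in> tc_Hom T A B" "g \<in> tc_Hom T B C" "h \<in> tc_Hom T C (tc_shO T A)"
    using dist_triangle[OF d] unfolding is_triangle_def by auto
  have cancel: "tc_cmp T (tc_cmp T u (tc_cmp T v i')) i = tc_cmp T u v"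
    if i: "i \<in> tc_Hom T P P'" "i' \<in> tc_Hom T P' P" "tc_cmp T i' i = tc_idm T P"
      and uv: "v \<in> tc_Hom T P Q" "u \<in> tc_Hom T Q R" for u v i i' P P' Q R
  proof -
    have "tc_cmp T (tc_cmp T v i') i = tc_cmp T v (tc_cmp T i' i)"
      using tc_cmp_assoc[OF i(1,2) uv(1)] by simp
    also have "\<dots> = v"
      using i(3) tc_cmp_idm[OF uv(1)] by simp
    finally show ?thesis
      using tc_cmp_assoc[OF i(1) tc_cmp_Hom[OF i(2) uv(1)] uv(2)] by simp
  qed
  note iso_Homs = iso_Hom[OF \<alpha>(1)] iso_Hom[OF \<alpha>(2)] iso_Hom[OF \<beta>(1)] iso_Hom[OF \<beta>(2)]
    iso_Hom[OF \<gamma>(1)] iso_Hom[OF \<gamma>(2)]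
  let ?t' = "(A', B', C', tc_cmp T \<beta> (tc_cmp T f \<alpha>'), tc_cmp T \<gamma> (tc_cmp T g \<beta>'),
    tc_cmp T (tc_shM T \<alpha>) (tc_cmp T h \<gamma>'))"
  have "tri_iso T (A, B, C, f, g, h) ?t' \<alpha> \<beta> \<gamma>"
    unfolding tri_iso_def tri_mor_def
    using \<alpha>(1) \<beta>(1) \<gamma>(1) iso_Homs
      cancel[OF iso_Homs(1,2) \<alpha>(3) Homs(1) iso_Homs(3)]
      cancel[OF iso_Homs(3,4) \<beta>(3) Homs(2) iso_Homs(5)]
      cancel[OF iso_Homs(5,6) \<gamma>(3) Homs(3) shift_Hom[OF iso_Homs(1)]] by simp
  moreover have "is_triangle T ?t'"
    unfolding is_triangle_def
    using tc_cmp_Hom[OF tc_cmp_Hom[OF iso_Homs(2) Homs(1)] iso_Homs(3)]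
      tc_cmp_Hom[OF tc_cmp_Hom[OF iso_Homs(4) Homs(2)] iso_Homs(5)]
      tc_cmp_Hom[OF tc_cmp_Hom[OF iso_Homs(6) Homs(3)] shift_Hom[OF iso_Homs(1)]] by simp
  ultimately show ?thesis
    using dist_tri_iso[OF d] by blast
qed

section \<open>Classes closed under extensions\<close>

lemma ext_closed_iso_closed:
  assumes B: "ext_closed T B" "contains_zero T B"
  shows "iso_closed T B"
  unfolding iso_closed_def isomorphic_def
proof (intro ballI allI impI, elim exE)
  fix X X' \<phi> assume X: "X \<in> B" and \<phi>: "is_iso T X X' \<phi>"
  obtain Z where Z: "Z \<in> B" "is_zero_obj T Z"
    using B(2) unfolding contains_zero_def by blast
  have Obj: "X \<in> tc_Obj T" "X' \<in> tc_Obj T" "Z \<in> tc_Obj T" "tc_shO T X \<in> tc_Obj T"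
    using Hom_Obj[OF iso_Hom[OF \<phi>]] zero_obj_Obj[OF Z(2)] shift_Obj by auto
  \<comment> \<open>The trivial triangle on \<open>X\<close> is isomorphic, via \<open>(id, \<phi>, id)\<close>, to a triangle with middle vertex \<open>X'\<close>.\<close>
  let ?t = "(X, X, Z, tc_idm T X, tc_zero T X Z, tc_zero T Z (tc_shO T X))"
    and ?t' = "(X, X', Z, \<phi>, tc_zero T X' Z, tc_zero T Z (tc_shO T X))"
  note \<phi>_Hom = iso_Hom[OF \<phi>] and id_Homs = tc_idm_Hom[OF Obj(1)] tc_idm_Hom[OF Obj(3)]
    and zero_Homs = tc_zero_Hom[OF Obj(1,3)] tc_zero_Hom[OF Obj(2,3)] tc_zero_Hom[OF Obj(3,4)]
  have "tc_cmp T (tc_idm T Z) (tc_zero T X Z) = tc_cmp T (tc_zero T X' Z) \<phi>"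
    using to_zero_obj_unique[OF Z(2) tc_cmp_Hom[OF zero_Homs(1) id_Homs(2)]
        tc_cmp_Hom[OF \<phi>_Hom zero_Homs(2)]] .
  moreover have "tc_cmp T (tc_shM T (tc_idm T X)) (tc_zero T Z (tc_shO T X)) =
      tc_cmp T (tc_zero T Z (tc_shO T X)) (tc_idm T Z)"
    using from_zero_obj_unique[OF Z(2) tc_cmp_Hom[OF zero_Homs(3) shift_Hom[OF id_Homs(1)]]
        tc_cmp_Hom[OF id_Homs(2) zero_Homs(3)]] .
  ultimately have "tri_iso T ?t ?t' (tc_idm T X) \<phi> (tc_idm T Z)"
    unfolding tri_iso_def tri_mor_def
    using \<phi> \<phi>_Hom id_Homs iso_id[OF Obj(1)] iso_id[OF Obj(3)] by simp
  moreover have "is_triangle T ?t'"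
    unfolding is_triangle_def using Obj \<phi> iso_Hom tc_zero_Hom by auto
  ultimately have "?t' \<in> tc_Dist T"
    using dist_tri_iso dist_trivial Obj Z by blast
  then show "X' \<in> B"
    using B(1) X Z unfolding ext_closed_def by blast
qed

lemma ext_closed_zero_obj:
  assumes "ext_closed T B" "contains_zero T B" "is_zero_obj T Z"
  shows "Z \<in> B"
  using ext_closed_iso_closed[OF assms(1,2)] assms(2,3) zero_objs_isomorphic
  unfolding iso_closed_def contains_zero_def by blast

lemma ext_hull_Obj:
  assumes "S \<subseteq> tc_Obj T"
  shows "ext_hull T S \<subseteq> tc_Obj T"
proof
  fix X assume "X \<in> ext_hull T S"
  then show "X \<in> tc_Obj T"
  proof induction
    case (ext A B C f g h)
    then show ?case
      using dist_triangle[OF ext(1)] Hom_Obj unfolding is_triangle_def by blast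
  qed (use assms zero_obj_Obj in auto)
qed

lemma ext_hull_least:
  assumes "S \<subseteq> B" "ext_closed T B" "contains_zero T B"
  shows "ext_hull T S \<subseteq> B"
proof
  fix X assume "X \<in> ext_hull T S"
  then show "X \<in> B"
  proof induction
    case (base X)
    then show ?case using assms(1) by blast
  next
    case (zero Z)
    then show ?case by (rule ext_closed_zero_obj[OF assms(2,3)])
  next
    case (ext A Y C f g h)
    then show ?case using assms(2) unfolding ext_closed_def by blast
  qed
qed

lemma contains_zero_ext_hull: "contains_zero T (ext_hull T S)"
  using ex_zero_obj unfolding contains_zero_def by (blast intro: ext_hull.zero)

lemma ext_hull_shift:
  assumes B: "ext_closed T B" "contains_zero T B"
    and S: "\<And>Y. Y \<in> S \<Longrightarrow> tc_shO T Y \<in> B" and Y: "Y \<in> ext_hull T S"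
  shows "tc_shO T Y \<in> B"
proof -
  have "ext_hull T S \<subseteq> {Y. tc_shO T Y \<in> B}"
  proof (rule ext_hull_least)
    show "S \<subseteq> {Y. tc_shO T Y \<in> B}"
      using S by blast
    show "ext_closed T {Y. tc_shO T Y \<in> B}"
      using B(1) dist_shift unfolding ext_closed_def by blast
    obtain Z where "is_zero_obj T Z"
      using ex_zero_obj by blast
    then show "contains_zero T {Y. tc_shO T Y \<in> B}"
      using ext_closed_zero_obj[OF B zero_obj_shift] unfolding contains_zero_def by blast
  qed
  with Y show ?thesis by blast
qed

lemma contains_zero_desuspensions_in:
  assumes "ext_closed T B" "contains_zero T B"
  shows "contains_zero T (desuspensions_in T B)"
proof -
  obtain Z where Z: "is_zero_obj T Z"
    using ex_zero_obj by blast
  then have "Z \<in> desuspensions_in T B"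
    unfolding desuspensions_in_def
    using isomorphic_zero_obj zero_obj_shiftD ext_closed_zero_obj[OF assms] by blast
  with Z show ?thesis
    unfolding contains_zero_def by blast
qed

lemma ext_closed_desuspensions_in:
  assumes B: "ext_closed T B"
  shows "ext_closed T (desuspensions_in T B)"
  unfolding ext_closed_def
proof (intro allI impI, elim conjE)
  fix A Y C f g h
  assume d: "(A, Y, C, f, g, h) \<in> tc_Dist T"
    and A: "A \<in> desuspensions_in T B" and C: "C \<in> desuspensions_in T B"
  show "Y \<in> desuspensions_in T B"
    unfolding desuspensions_in_def
  proof (intro CollectI ballI impI)
    fix X assume X: "X \<in> tc_Obj T" and XY: "isomorphic T (tc_shO T X) Y"
    have "A \<in> tc_Obj T" "C \<in> tc_Obj T"
      using dist_triangle[OF d] Hom_Obj unfolding is_triangle_def by auto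
    then obtain Xa Xc where Xa: "Xa \<in> tc_Obj T" "isomorphic T (tc_shO T Xa) A"
      and Xc: "Xc \<in> tc_Obj T" "isomorphic T (tc_shO T Xc) C"
      using shift_ess_surj by blast
    then obtain f' g' h' where "(tc_shO T Xa, tc_shO T X, tc_shO T Xc, f', g', h') \<in> tc_Dist T"
      using dist_isomorphic_vertices[OF d] isomorphic_sym XY by blast
    then obtain u v w where "(Xa, X, Xc, u, v, w) \<in> tc_Dist T"
      using dist_desuspend Xa Xc X by blast
    moreover have "Xa \<in> B" "Xc \<in> B"
      using A C Xa Xc unfolding desuspensions_in_def by blast+
    ultimately show "X \<in> B"
      using B unfolding ext_closed_def by blast
  qed
qed

lemma ext_hull_desuspend:
  assumes B: "ext_closed T B" "contains_zero T B"
    and S: "iso_closed T S" "\<And>X. X \<in> tc_Obj T \<Longrightarrow> tc_shO T X \<in> S \<Longrightarrow> X \<in> B"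
    and X: "X \<in> tc_Obj T" "tc_shO T X \<in> ext_hull T S"
  shows "X \<in> B"
proof -
  have "S \<subseteq> desuspensions_in T B"
    using S isomorphic_sym unfolding desuspensions_in_def iso_closed_def by blast
  then have "ext_hull T S \<subseteq> desuspensions_in T B"
    using ext_hull_least ext_closed_desuspensions_in[OF B(1)] contains_zero_desuspensions_in[OF B]
    by blast
  then show ?thesis
    using X isomorphic_refl[OF shift_Obj[OF X(1)]] unfolding desuspensions_in_def by blast
qed

end

section \<open>Good metrics\<close>

lemma good_metricI:
  assumes "\<And>n. B n \<subseteq> tc_Obj T" "\<And>n. contains_zero T (B n)" "\<And>n. ext_closed T (B n)"
    and "\<And>n. B (Suc n) \<subseteq> B n"
    and "\<And>n X. X \<in> tc_Obj T \<Longrightarrow> tc_shO T X \<in> B (Suc n) \<Longrightarrow> X \<in> B n"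
    and "\<And>n X. X \<in> B (Suc n) \<Longrightarrow> tc_shO T X \<in> B n"
  shows "good_metric T B"
  unfolding good_metric_def using assms by blast

lemma good_metricD:
  assumes "good_metric T B"
  shows good_metric_subset_Obj: "B n \<subseteq> tc_Obj T"
    and good_metric_contains_zero: "contains_zero T (B n)"
    and good_metric_ext_closed: "ext_closed T (B n)"
    and good_metric_Suc_subset: "B (Suc n) \<subseteq> B n"
    and good_metric_desuspend: "X \<in> tc_Obj T \<Longrightarrow> tc_shO T X \<in> B (Suc n) \<Longrightarrow> X \<in> B n"
    and good_metric_suspend: "X \<in> B (Suc n) \<Longrightarrow> tc_shO T X \<in> B n"
  using assms unfolding good_metric_def by blast+

lemma good_metric_antimono: "good_metric T B \<Longrightarrow> antimono B"
  by (simp add: good_metric_def antimono_iff_le_Suc)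

lemma metric_le_common_index:
  assumes "antimono A" "antimono C" "metric_le A A'" "metric_le C C'"
  obtains m where "A m \<subseteq> A' n" "C m \<subseteq> C' n"
proof -
  obtain k l where "A k \<subseteq> A' n" "C l \<subseteq> C' n"
    using assms(3,4) unfolding metric_le_def by blast
  then show thesis
    using that[of "max k l"] antimonoD[OF assms(1), of k "max k l"] antimonoD[OF assms(2), of l "max k l"]
    by auto
qed

lemma metric_meet_le1: "metric_le (metric_meet A C) A"
  unfolding metric_le_def metric_meet_def by blast

lemma metric_meet_le2: "metric_le (metric_meet A C) C"
  unfolding metric_le_def metric_meet_def by blast

lemma metric_meet_greatest:
  assumes "antimono D" "metric_le D A" "metric_le D C"
  shows "metric_le D (metric_meet A C)"
  unfolding metric_le_def metric_meet_def
  by (metis Int_greatest metric_le_common_index[OF assms(1,1,2,3)])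

lemma metric_meet_mono:
  assumes "antimono A" "antimono C" "metric_le A A'" "metric_le C C'"
  shows "metric_le (metric_meet A C) (metric_meet A' C')"
  unfolding metric_le_def metric_meet_def
  by (metis Int_mono metric_le_common_index[OF assms])

lemma metric_equiv_meet:
  assumes "antimono A" "antimono A'" "antimono C" "antimono C'"
    and "metric_equiv A A'" "metric_equiv C C'"
  shows "metric_equiv (metric_meet A C) (metric_meet A' C')"
  using assms metric_meet_mono unfolding metric_equiv_def by blast

lemma metric_le_join1: "metric_le A (metric_join T A C)"
  unfolding metric_le_def metric_join_def by (blast intro: ext_hull.base)

lemma metric_le_join2: "metric_le C (metric_join T A C)"
  unfolding metric_le_def metric_join_def by (blast intro: ext_hull.base)

lemma metric_join_mono:
  assumes "antimono A" "antimono C" "metric_le A A'" "metric_le C C'"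
  shows "metric_le (metric_join T A C) (metric_join T A' C')"
  unfolding metric_le_def metric_join_def
  by (metis Un_mono ext_hull_mono metric_le_common_index[OF assms])

lemma metric_equiv_join:
  assumes "antimono A" "antimono A'" "antimono C" "antimono C'"
    and "metric_equiv A A'" "metric_equiv C C'"
  shows "metric_equiv (metric_join T A C) (metric_join T A' C')"
  using assms metric_join_mono unfolding metric_equiv_def by blast

context triangulated_category
begin

lemma good_metric_iso_closed: "good_metric T B \<Longrightarrow> iso_closed T (B n)"
  using ext_closed_iso_closed good_metric_ext_closed good_metric_contains_zero by blast

lemma good_metric_meet:
  assumes A: "good_metric T A" and C: "good_metric T C"
  shows "good_metric T (metric_meet A C)"
  unfolding metric_meet_def
proof (rule good_metricI)
  fix n X
  show "A n \<inter> C n \<subseteq> tc_Obj T"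
    using good_metric_subset_Obj[OF A] by blast
  obtain Z where "Z \<in> A n" "is_zero_obj T Z"
    using good_metric_contains_zero[OF A] unfolding contains_zero_def by blast
  moreover have "Z \<in> C n"
    by (rule ext_closed_zero_obj[OF good_metric_ext_closed[OF C] good_metric_contains_zero[OF C]
          \<open>is_zero_obj T Z\<close>])
  ultimately show "contains_zero T (A n \<inter> C n)"
    unfolding contains_zero_def by blast
  show "ext_closed T (A n \<inter> C n)"
    using good_metric_ext_closed[OF A] good_metric_ext_closed[OF C] unfolding ext_closed_def by blast
  show "A (Suc n) \<inter> C (Suc n) \<subseteq> A n \<inter> C n"
    using good_metric_Suc_subset[OF A] good_metric_Suc_subset[OF C] by blast
  show "X \<in> A n \<inter> C n" if "X \<in> tc_Obj T" "tc_shO T X \<in> A (Suc n) \<inter> C (Suc n)"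
    using that good_metric_desuspend[OF A] good_metric_desuspend[OF C] by blast
  show "tc_shO T X \<in> A n \<inter> C n" if "X \<in> A (Suc n) \<inter> C (Suc n)"
    using that good_metric_suspend[OF A] good_metric_suspend[OF C] by blast
qed

lemma good_metric_join:
  assumes A: "good_metric T A" and C: "good_metric T C"
  shows "good_metric T (metric_join T A C)"
  unfolding metric_join_def
proof (rule good_metricI[OF _ contains_zero_ext_hull ext_closed_ext_hull])
  fix n X
  show "ext_hull T (A n \<union> C n) \<subseteq> tc_Obj T"
    by (rule ext_hull_Obj) (use good_metric_subset_Obj[OF A] good_metric_subset_Obj[OF C] in blast)
  show "ext_hull T (A (Suc n) \<union> C (Suc n)) \<subseteq> ext_hull T (A n \<union> C n)"
    by (rule ext_hull_mono) (use good_metric_Suc_subset[OF A] good_metric_Suc_subset[OF C] in blast)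
  show "X \<in> ext_hull T (A n \<union> C n)"
    if "X \<in> tc_Obj T" "tc_shO T X \<in> ext_hull T (A (Suc n) \<union> C (Suc n))"
  proof (rule ext_hull_desuspend[OF ext_closed_ext_hull contains_zero_ext_hull _ _ that])
    show "iso_closed T (A (Suc n) \<union> C (Suc n))"
      using iso_closed_Un[OF good_metric_iso_closed[OF A] good_metric_iso_closed[OF C]] .
    show "Y \<in> ext_hull T (A n \<union> C n)" if "Y \<in> tc_Obj T" "tc_shO T Y \<in> A (Suc n) \<union> C (Suc n)" for Y
      using that good_metric_desuspend[OF A] good_metric_desuspend[OF C] by (blast intro: ext_hull.base)
  qed
  show "tc_shO T X \<in> ext_hull T (A n \<union> C n)" if "X \<in> ext_hull T (A (Suc n) \<union> C (Suc n))"
  proof (rule ext_hull_shift[OF ext_closed_ext_hull contains_zero_ext_hull _ that])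
    show "tc_shO T Y \<in> ext_hull T (A n \<union> C n)" if "Y \<in> A (Suc n) \<union> C (Suc n)" for Y
      using that good_metric_suspend[OF A] good_metric_suspend[OF C] by (blast intro: ext_hull.base)
  qed
qed

lemma metric_join_least:
  assumes "antimono A" "antimono C" "\<And>n. ext_closed T (D n)" "\<And>n. contains_zero T (D n)"
    and "metric_le A D" "metric_le C D"
  shows "metric_le (metric_join T A C) D"
  unfolding metric_le_def metric_join_def
  by (metis Un_least ext_hull_least assms(3,4) metric_le_common_index[OF assms(1,2,5,6)])

end

theorem proposition5p2:
  fixes T :: "('o,'m) tcat"
  assumes "is_triangulated T"
  shows "(\<forall>A C. good_metric T A \<and> good_metric T C \<longrightarrow>
            good_metric T (metric_meet A C) \<and>
            metric_le (metric_meet A C) A \<and> metric_le (metric_meet A C) C \<and>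
            (\<forall>D. good_metric T D \<and> metric_le D A \<and> metric_le D C \<longrightarrow> metric_le D (metric_meet A C)) \<and>
            good_metric T (metric_join T A C) \<and>
            metric_le A (metric_join T A C) \<and> metric_le C (metric_join T A C) \<and>
            (\<forall>D. good_metric T D \<and> metric_le A D \<and> metric_le C D \<longrightarrow> metric_le (metric_join T A C) D))
       \<and> (\<forall>A A' C C'. good_metric T A \<and> good_metric T A' \<and> good_metric T C \<and> good_metric T C' \<and>
            metric_equiv A A' \<and> metric_equiv C C' \<longrightarrow>
            metric_equiv (metric_meet A C) (metric_meet A' C') \<and>
            metric_equiv (metric_join T A C) (metric_join T A' C'))"
proof -
  interpret triangulated_category T
    using assms by unfold_locales
  show ?thesis
  proof (intro conjI allI impI)
    fix A C assume "good_metric T A \<and> good_metric T C"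
    then have A: "good_metric T A" and C: "good_metric T C" by auto
    show "good_metric T (metric_meet A C)" "good_metric T (metric_join T A C)"
      by (rule good_metric_meet[OF A C] good_metric_join[OF A C])+
    show "metric_le (metric_meet A C) A" "metric_le (metric_meet A C) C"
      "metric_le A (metric_join T A C)" "metric_le C (metric_join T A C)"
      by (rule metric_meet_le1 metric_meet_le2 metric_le_join1 metric_le_join2)+
    fix D
    assume "good_metric T D \<and> metric_le D A \<and> metric_le D C"
    then show "metric_le D (metric_meet A C)"
      using metric_meet_greatest good_metric_antimono by blast
  next
    fix A C D assume "good_metric T A \<and> good_metric T C"
      and "good_metric T D \<and> metric_le A D \<and> metric_le C D"
    then have A: "good_metric T A" and C: "good_metric T C" and D: "good_metric T D"
      and le: "metric_le A D" "metric_le C D" by auto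
    show "metric_le (metric_join T A C) D"
      using metric_join_least[OF good_metric_antimono[OF A] good_metric_antimono[OF C]
          good_metric_ext_closed[OF D] good_metric_contains_zero[OF D] le] .
  next
    fix A A' C C'
    assume "good_metric T A \<and> good_metric T A' \<and> good_metric T C \<and> good_metric T C' \<and>
      metric_equiv A A' \<and> metric_equiv C C'"
    then have mono: "antimono A" "antimono A'" "antimono C" "antimono C'"
      and equiv: "metric_equiv A A'" "metric_equiv C C'"
      using good_metric_antimono by auto
    show "metric_equiv (metric_meet A C) (metric_meet A' C')"
      using metric_equiv_meet[OF mono equiv] .
    show "metric_equiv (metric_join T A C) (metric_join T A' C')"
      using metric_equiv_join[OF mono equiv] .
  qed
qed

end
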